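(* Let $F=(V,E)$ be a forest whose vertices are colored with $k\ge 2$ colors in a ratio $c_1:c_2:\dots:c_k$, where $c_i\in\mathbb{N}_{>0}$ for all $i\in[k]$, $\gcd(c_1,\dots,c_k)=1$ and $\sum_{i=1}^k c_i\ge 3$. Then every set of every minimum-cost fair clustering of $F$ has exactly $d=\sum_{i=1}^k c_i$ vertices.
   Context: All graphs are finite, simple and undirected. For a graph $G=(V,E)$ and a partition $\mathcal{P}$ of $V$, write $\mathcal{P}[u]$ for the set of $\mathcal{P}$ containing $u$. The cost is $$\mathrm{cost}(G,\mathcal{P})=\Big|\Big\{\{u,v\}\in\tbinom{V}{2}\setminus E : \mathcal{P}[u]=\mathcal{P}[v]\Big\}\Big|+\Big|\Big\{\{u,v\}\in E:\mathcal{P}[u]\neq\mathcal{P}[v]\Big\}\Big|.$$ A coloring is a map $c:V\to[k]$; let $V_i=c^{-1}(i)$. A set $S\subseteq V$ is fair if $|S\cap V_i|/|S|=|V_i|/|V|$ for every $i\in[k]$. A fair clustering is a partition of $V$ all of whose sets are fair; it is minimum-cost if no fair clustering has smaller cost. The colors are in ratio $c_1:\dots:c_k$ (positive integers) if there is $t\in\mathbb{N}_{>0}$ with $|V_i|=t\,c_i$ for all $i\in[k]$. *)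

theory Defs
  imports Complex_Main "HOL-Library.Disjoint_Sets"
begin

definition simple_graph :: "'a set \<Rightarrow> 'a set set \<Rightarrow> bool" where
  "simple_graph V E \<longleftrightarrow> finite V \<and>
     (\<forall>e\<in>E. \<exists>u v. u \<in> V \<and> v \<in> V \<and> u \<noteq> v \<and> e = {u, v})"

definition is_cycle :: "'a set \<Rightarrow> 'a set set \<Rightarrow> 'a list \<Rightarrow> bool" where
  "is_cycle V E xs \<longleftrightarrow> length xs \<ge> 3 \<and> distinct xs \<and> set xs \<subseteq> V \<and>
     (\<forall>i. Suc i < length xs \<longrightarrow> {xs ! i, xs ! Suc i} \<in> E) \<and>
     {last xs, hd xs} \<in> E"

definition forest :: "'a set \<Rightarrow> 'a set set \<Rightarrow> bool" where
  "forest V E \<longleftrightarrow> simple_graph V E \<and> (\<nexists>xs. is_cycle V E xs)"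

definition cluster_of :: "'a set set \<Rightarrow> 'a \<Rightarrow> 'a set" where
  "cluster_of P u = (THE S. S \<in> P \<and> u \<in> S)"

definition cost :: "'a set \<Rightarrow> 'a set set \<Rightarrow> 'a set set \<Rightarrow> nat" where
  "cost V E P =
     card {{u, v} | u v. u \<in> V \<and> v \<in> V \<and> u \<noteq> v \<and> {u, v} \<notin> E \<and>
                          cluster_of P u = cluster_of P v}
   + card {e \<in> E. \<exists>u v. e = {u, v} \<and> cluster_of P u \<noteq> cluster_of P v}"

definition color_class :: "'a set \<Rightarrow> ('a \<Rightarrow> nat) \<Rightarrow> nat \<Rightarrow> 'a set" where
  "color_class V col i = {v \<in> V. col v = i}"

definition fair :: "'a set \<Rightarrow> ('a \<Rightarrow> nat) \<Rightarrow> nat \<Rightarrow> 'a set \<Rightarrow> bool" where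
  "fair V col k S \<longleftrightarrow> (\<forall>i\<in>{1..k}.
     real (card (S \<inter> color_class V col i)) / real (card S)
       = real (card (color_class V col i)) / real (card V))"

definition fair_clustering :: "'a set \<Rightarrow> ('a \<Rightarrow> nat) \<Rightarrow> nat \<Rightarrow> 'a set set \<Rightarrow> bool" where
  "fair_clustering V col k P \<longleftrightarrow> partition_on V P \<and> (\<forall>S\<in>P. fair V col k S)"

definition min_cost_fair_clustering ::
  "'a set \<Rightarrow> 'a set set \<Rightarrow> ('a \<Rightarrow> nat) \<Rightarrow> nat \<Rightarrow> 'a set set \<Rightarrow> bool" where
  "min_cost_fair_clustering V E col k P \<longleftrightarrow> fair_clustering V col k P \<and>
     (\<forall>Q. fair_clustering V col k Q \<longrightarrow> cost V E P \<le> cost V E Q)"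

definition in_ratio :: "'a set \<Rightarrow> ('a \<Rightarrow> nat) \<Rightarrow> nat \<Rightarrow> (nat \<Rightarrow> nat) \<Rightarrow> bool" where
  "in_ratio V col k c \<longleftrightarrow> (\<exists>t::nat. t > 0 \<and>
     (\<forall>i\<in>{1..k}. card (color_class V col i) = t * c i))"

end

theory Submission
  imports Defs
begin

text \<open>A fair block S contains m c_i vertices of colour i for some m > 0. If m \<ge> 2, split off a
  sub-block A with exactly c_i vertices of colour i: both parts stay fair, and the cost changes by
  the number of edges minus the number of non-edges among the d (m - 1) d pairs between A and
  S - A, where d = c_1 + ... + c_k. The forest induced on S has fewer than m d edges, and A can be
  chosen so that one of them is not cut, unless every edge of S is a whole colour class of S, in
  which case there are at most k \<le> d of them. Either way fewer than half of those pairs are edges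
  (this is where d \<ge> 3 enters), so the split lowers the cost and a minimum-cost fair clustering
  has m = 1.\<close>

section \<open>Forests\<close>

lemma simple_graph_finite: "simple_graph V E \<Longrightarrow> finite V"
  unfolding simple_graph_def by (rule conjunct1)

lemma forest_simple_graph: "forest V E \<Longrightarrow> simple_graph V E"
  unfolding forest_def by (rule conjunct1)

lemma simple_graph_edgeD:
  "simple_graph V E \<Longrightarrow> e \<in> E \<Longrightarrow> \<exists>a b. a \<in> V \<and> b \<in> V \<and> a \<noteq> b \<and> e = {a, b}"
  unfolding simple_graph_def by blast

lemma simple_graph_edge_subset: "simple_graph V E \<Longrightarrow> e \<in> E \<Longrightarrow> e \<subseteq> V"
  unfolding simple_graph_def by force

lemma simple_graph_no_loop: "simple_graph V E \<Longrightarrow> {u} \<notin> E"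
  unfolding simple_graph_def by force

definition path_in :: "'a set set \<Rightarrow> 'a set \<Rightarrow> 'a list \<Rightarrow> bool" where
  "path_in E W xs \<longleftrightarrow> distinct xs \<and> set xs \<subseteq> W \<and>
     (\<forall>i. Suc i < length xs \<longrightarrow> {xs ! i, xs ! Suc i} \<in> E)"

lemma path_in_snoc:
  assumes "path_in E W xs" "xs \<noteq> []" "u \<in> W" "u \<notin> set xs" "{last xs, u} \<in> E"
  shows "path_in E W (xs @ [u])"
  unfolding path_in_def
proof (intro conjI allI impI)
  show "distinct (xs @ [u])" "set (xs @ [u]) \<subseteq> W"
    using assms unfolding path_in_def by auto
  fix i assume i: "Suc i < length (xs @ [u])"
  show "{(xs @ [u]) ! i, (xs @ [u]) ! Suc i} \<in> E"
  proof (cases "Suc i < length xs")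
    case True
    then show ?thesis using assms(1) unfolding path_in_def by (simp add: nth_append)
  next
    case False
    with i have "i = length xs - 1" by simp
    then show ?thesis using assms(2,5) by (simp add: nth_append last_conv_nth)
  qed
qed

lemma is_cycle_drop:
  assumes "path_in E W xs" "W \<subseteq> V" "j + 3 \<le> length xs" "{last xs, xs ! j} \<in> E"
  shows "is_cycle V E (drop j xs)"
  using assms unfolding is_cycle_def path_in_def
  by (auto simp: hd_drop_conv_nth dest: in_set_dropD)

lemma longest_path_exists:
  assumes "finite W" "w \<in> W"
  obtains xs where "path_in E W xs" "xs \<noteq> []"
    "\<And>ys. path_in E W ys \<Longrightarrow> ys \<noteq> [] \<Longrightarrow> length ys \<le> length xs"
proof -
  have "path_in E W [w] \<and> [w] \<noteq> []" using assms(2) unfolding path_in_def by simp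
  moreover have "\<forall>ys. path_in E W ys \<and> ys \<noteq> [] \<longrightarrow> length ys < Suc (card W)"
    unfolding path_in_def using assms(1) by (metis card_mono distinct_card less_Suc_eq_le)
  ultimately have "\<exists>xs. (path_in E W xs \<and> xs \<noteq> []) \<and>
      (\<forall>ys. path_in E W ys \<and> ys \<noteq> [] \<longrightarrow> length ys \<le> length xs)"
    by (rule ex_has_greatest_nat)
  then show thesis using that by blast
qed

text \<open>The last vertex of a longest path has all its neighbours on the path, and any of them other
  than its predecessor would close a cycle.\<close>
lemma forest_has_leaf:
  assumes f: "forest V E" and W: "W \<subseteq> V" "w \<in> W"
  shows "\<exists>z\<in>W. card {u\<in>W. {z, u} \<in> E} \<le> 1"
proof -
  have sg: "simple_graph V E" and acyclic: "\<nexists>ys. is_cycle V E ys"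
    using f unfolding forest_def by auto
  have fin: "finite W" using simple_graph_finite[OF sg] W(1) by (rule finite_subset[rotated])
  obtain xs where xs: "path_in E W xs" "xs \<noteq> []"
    and longest: "\<And>ys. path_in E W ys \<Longrightarrow> ys \<noteq> [] \<Longrightarrow> length ys \<le> length xs"
    using longest_path_exists[where E = E, OF fin W(2)] by blast
  define z where "z = last xs"
  have "{u\<in>W. {z, u} \<in> E} \<subseteq> {xs ! (length xs - 2)}"
  proof
    fix u assume u: "u \<in> {u\<in>W. {z, u} \<in> E}"
    have "u \<in> set xs"
    proof (rule ccontr)
      assume "u \<notin> set xs"
      then have "path_in E W (xs @ [u])" using path_in_snoc[OF xs, of u] u unfolding z_def by blast
      then show False using longest[of "xs @ [u]"] by simp
    qed
    then obtain j where j: "j < length xs" "xs ! j = u" by (meson in_set_conv_nth)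
    have "u \<noteq> z" using u simple_graph_no_loop[OF sg] by auto
    then have "j \<noteq> length xs - 1" using j xs(2) unfolding z_def by (auto simp: last_conv_nth)
    moreover have "\<not> j + 3 \<le> length xs"
    proof
      assume "j + 3 \<le> length xs"
      moreover have "{last xs, xs ! j} \<in> E" using u j(2) unfolding z_def by simp
      ultimately show False using is_cycle_drop[OF xs(1) W(1)] acyclic by blast
    qed
    ultimately have "j = length xs - 2" using j(1) by linarith
    then show "u \<in> {xs ! (length xs - 2)}" using j(2) by simp
  qed
  then have "card {u\<in>W. {z, u} \<in> E} \<le> card {xs ! (length xs - 2)}"
    by (intro card_mono) auto
  moreover have "z \<in> W" using xs unfolding z_def path_in_def by auto
  ultimately show ?thesis by auto
qed

lemma card_edges_within_insert_le:
  assumes sg: "simple_graph V E" and fin: "finite W"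
  shows "card {e\<in>E. e \<subseteq> insert z W} \<le> card {e\<in>E. e \<subseteq> W} + card {u\<in>W. {z, u} \<in> E}"
proof -
  have "{e\<in>E. e \<subseteq> insert z W} \<subseteq> {e\<in>E. e \<subseteq> W} \<union> (\<lambda>u. {z, u}) ` {u\<in>W. {z, u} \<in> E}"
  proof
    fix e assume e: "e \<in> {e\<in>E. e \<subseteq> insert z W}"
    then obtain a b where ab: "a \<noteq> b" "e = {a, b}" using simple_graph_edgeD[OF sg] by blast
    show "e \<in> {e\<in>E. e \<subseteq> W} \<union> (\<lambda>u. {z, u}) ` {u\<in>W. {z, u} \<in> E}"
    proof (cases "z \<in> e")
      case True
      then obtain u where u: "e = {z, u}" using ab by (metis insert_commute insertE singletonD)
      then have "u \<noteq> z" using ab by auto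
      then have "u \<in> W" using e u by blast
      then show ?thesis using e u by blast
    next
      case False
      then show ?thesis using e by blast
    qed
  qed
  moreover have "finite {e\<in>E. e \<subseteq> W}" using fin by (auto intro: finite_subset[of _ "Pow W"])
  ultimately have "card {e\<in>E. e \<subseteq> insert z W}
      \<le> card ({e\<in>E. e \<subseteq> W} \<union> (\<lambda>u. {z, u}) ` {u\<in>W. {z, u} \<in> E})"
    using fin by (intro card_mono) auto
  also have "\<dots> \<le> card {e\<in>E. e \<subseteq> W} + card ((\<lambda>u. {z, u}) ` {u\<in>W. {z, u} \<in> E})"
    by (rule card_Un_le)
  also have "\<dots> \<le> card {e\<in>E. e \<subseteq> W} + card {u\<in>W. {z, u} \<in> E}"
    using fin by (simp add: card_image_le)
  finally show ?thesis .
qed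

lemma forest_card_edges_within_less:
  assumes f: "forest V E"
  shows "W \<subseteq> V \<Longrightarrow> W \<noteq> {} \<Longrightarrow> card {e\<in>E. e \<subseteq> W} < card W"
proof (induction "card W" arbitrary: W rule: less_induct)
  case less
  have sg: "simple_graph V E" by (rule forest_simple_graph[OF f])
  have fin: "finite W" using simple_graph_finite[OF sg] less.prems(1) by (rule finite_subset[rotated])
  obtain z where z: "z \<in> W" "card {u\<in>W. {z, u} \<in> E} \<le> 1"
    using forest_has_leaf[OF f less.prems(1)] less.prems(2) by blast
  show ?case
  proof (cases "W = {z}")
    case True
    have "\<not> e \<subseteq> {z}" if "e \<in> E" for e using simple_graph_edgeD[OF sg that] by blast
    then have "{e\<in>E. e \<subseteq> W} = {}" using True by blast
    then show ?thesis using True by simp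
  next
    case False
    define W' where "W' = W - {z}"
    have W': "W' \<subseteq> V" "W' \<noteq> {}" "card W' < card W" "W = insert z W'"
      using less.prems(1) False z(1) card_Diff1_less[OF fin z(1)] unfolding W'_def by blast+
    have "card {e\<in>E. e \<subseteq> W} \<le> card {e\<in>E. e \<subseteq> W'} + card {u\<in>W'. {z, u} \<in> E}"
      using card_edges_within_insert_le[OF sg, of W' z] fin W'(4) by simp
    moreover have "card {u\<in>W'. {z, u} \<in> E} \<le> card {u\<in>W. {z, u} \<in> E}"
      using fin unfolding W'_def by (intro card_mono) auto
    moreover have "card {e\<in>E. e \<subseteq> W'} < card W'" using less.hyps W' by blast
    moreover have "card W = Suc (card W')" using card_Suc_Diff1[OF fin z(1)] unfolding W'_def by simp
    ultimately show ?thesis using z(2) by linarith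
  qed
qed

section \<open>Clusterings and their cost\<close>

definition pairs :: "'a set \<Rightarrow> 'a set set" where
  "pairs V = {{u, v} | u v. u \<in> V \<and> v \<in> V \<and> u \<noteq> v}"

definition within_blocks :: "'a set set \<Rightarrow> 'a set set" where
  "within_blocks P = {e. \<exists>X\<in>P. e \<subseteq> X}"

definition cross :: "'a set \<Rightarrow> 'a set \<Rightarrow> 'a set set" where
  "cross A B = {{a, b} | a b. a \<in> A \<and> b \<in> B}"

lemma cluster_of_eq:
  assumes "partition_on V P" "X \<in> P" "u \<in> X"
  shows "cluster_of P u = X"
  unfolding cluster_of_def
proof (rule the_equality)
  show "X \<in> P \<and> u \<in> X" using assms(2,3) ..
  fix Y assume Y: "Y \<in> P \<and> u \<in> Y"
  show "Y = X"
  proof (rule ccontr)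
    assume "Y \<noteq> X"
    then have "Y \<inter> X = {}" using disjointD[OF partition_onD2[OF assms(1)]] Y assms(2) by blast
    then show False using Y assms(3) by blast
  qed
qed

lemma cluster_of_eq_iff:
  assumes P: "partition_on V P" and "u \<in> V" "v \<in> V"
  shows "cluster_of P u = cluster_of P v \<longleftrightarrow> {u, v} \<in> within_blocks P"
proof
  obtain X where "X \<in> P" "u \<in> X" using assms partition_onD1[OF P] by blast
  moreover assume "cluster_of P u = cluster_of P v"
  moreover obtain Y where "Y \<in> P" "v \<in> Y" using assms partition_onD1[OF P] by blast
  ultimately have "X = Y" using cluster_of_eq[OF P] by simp
  then show "{u, v} \<in> within_blocks P"
    using \<open>X \<in> P\<close> \<open>u \<in> X\<close> \<open>v \<in> Y\<close> unfolding within_blocks_def by blast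
next
  assume "{u, v} \<in> within_blocks P"
  then obtain Z where "Z \<in> P" "u \<in> Z" "v \<in> Z" unfolding within_blocks_def by blast
  then show "cluster_of P u = cluster_of P v" using cluster_of_eq[OF P] by simp
qed

lemma cost_eq_within_blocks:
  assumes sg: "simple_graph V E" and P: "partition_on V P"
  shows "cost V E P = card ((pairs V - E) \<inter> within_blocks P) + card (E - within_blocks P)"
proof -
  have "(u \<in> V \<and> v \<in> V \<and> u \<noteq> v \<and> {u, v} \<notin> E \<and> cluster_of P u = cluster_of P v)
    \<longleftrightarrow> (u \<in> V \<and> v \<in> V \<and> u \<noteq> v \<and> {u, v} \<notin> E \<and> {u, v} \<in> within_blocks P)" for u v
    using cluster_of_eq_iff[OF P, of u v] by blast
  then have "{{u, v} | u v. u \<in> V \<and> v \<in> V \<and> u \<noteq> v \<and> {u, v} \<notin> E \<and> cluster_of P u = cluster_of P v}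
      = {{u, v} | u v. u \<in> V \<and> v \<in> V \<and> u \<noteq> v \<and> {u, v} \<notin> E \<and> {u, v} \<in> within_blocks P}"
    by (simp only:)
  also have "\<dots> = (pairs V - E) \<inter> within_blocks P"
    unfolding pairs_def by blast
  moreover have "{e\<in>E. \<exists>u v. e = {u, v} \<and> cluster_of P u \<noteq> cluster_of P v} = E - within_blocks P"
  proof (intro set_eqI iffI)
    fix e assume "e \<in> {e\<in>E. \<exists>u v. e = {u, v} \<and> cluster_of P u \<noteq> cluster_of P v}"
    then obtain u v where e: "e \<in> E" "e = {u, v}" "cluster_of P u \<noteq> cluster_of P v" by blast
    then have "u \<in> V" "v \<in> V" using simple_graph_edge_subset[OF sg] by auto
    then show "e \<in> E - within_blocks P" using e cluster_of_eq_iff[OF P, of u v] by simp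
  next
    fix e assume e: "e \<in> E - within_blocks P"
    then obtain a b where "a \<in> V" "b \<in> V" "e = {a, b}" using simple_graph_edgeD[OF sg] by blast
    then show "e \<in> {e\<in>E. \<exists>u v. e = {u, v} \<and> cluster_of P u \<noteq> cluster_of P v}"
      using e cluster_of_eq_iff[OF P, of a b] by blast
  qed
  ultimately show ?thesis unfolding cost_def by simp
qed

lemma partition_on_split_block:
  assumes P: "partition_on V P" and S: "S \<in> P"
    and AB: "A \<union> B = S" "A \<inter> B = {}" "A \<noteq> {}" "B \<noteq> {}"
  shows "partition_on V (insert A (insert B (P - {S})))"
proof -
  have disj: "T \<inter> A = {} \<and> T \<inter> B = {}" if "T \<in> P - {S}" for T
    using that S AB(1) disjointD[OF partition_onD2[OF P]] by blast
  have "disjoint (P - {S})" using partition_onD2[OF P] by (rule pairwise_subset) blast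
  then have "disjoint (insert A (insert B (P - {S})))"
    using disj AB(2) by (auto simp: pairwise_insert disjnt_def)
  moreover have "\<Union>(insert A (insert B (P - {S}))) = V"
    using partition_onD1[OF P] S AB(1) by blast
  ultimately show ?thesis
    using partition_onD3[OF P] AB(3,4) unfolding partition_on_def by blast
qed

lemma within_blocks_split_block:
  assumes P: "partition_on V P" and S: "S \<in> P" and AB: "A \<union> B = S" "A \<inter> B = {}"
  shows "pairs V \<inter> within_blocks (insert A (insert B (P - {S})))
    = pairs V \<inter> within_blocks P - cross A B"
proof -
  have disj: "T \<inter> S = {}" if "T \<in> P - {S}" for T
    using that S disjointD[OF partition_onD2[OF P]] by blast
  show ?thesis
  proof (intro set_eqI iffI)
    fix e assume "e \<in> pairs V \<inter> within_blocks (insert A (insert B (P - {S})))"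
    then obtain u v T where e: "e = {u, v}" "u \<noteq> v" "e \<in> pairs V"
      "T \<in> insert A (insert B (P - {S}))" "e \<subseteq> T"
      unfolding pairs_def within_blocks_def by blast
    then show "e \<in> pairs V \<inter> within_blocks P - cross A B"
      using S AB disj unfolding within_blocks_def cross_def by (auto simp: doubleton_eq_iff)
  next
    fix e assume "e \<in> pairs V \<inter> within_blocks P - cross A B"
    then obtain u v T where e: "e = {u, v}" "e \<in> pairs V" "T \<in> P" "u \<in> T" "v \<in> T"
      "e \<notin> cross A B"
      unfolding pairs_def within_blocks_def by blast
    show "e \<in> pairs V \<inter> within_blocks (insert A (insert B (P - {S})))"
    proof (cases "T = S")
      case True
      then have "{u, v} \<subseteq> A \<or> {u, v} \<subseteq> B"
        using e AB unfolding cross_def by (auto simp: insert_commute)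
      then show ?thesis using e unfolding within_blocks_def by blast
    next
      case False
      then show ?thesis using e unfolding within_blocks_def by blast
    qed
  qed
qed

lemma cross_eq_image: "cross A B = (\<lambda>(a, b). {a, b}) ` (A \<times> B)"
  unfolding cross_def by auto

lemma card_cross:
  assumes "A \<inter> B = {}"
  shows "card (cross A B) = card A * card B"
proof -
  have "inj_on (\<lambda>(a, b). {a, b}) (A \<times> B)"
    using assms unfolding inj_on_def by (auto simp: doubleton_eq_iff)
  then show ?thesis by (simp add: cross_eq_image card_image card_cartesian_product)
qed

text \<open>Bookkeeping for pairs X that stop lying in a common block: the non-edges of X no longer
  count towards the cost, the edges of X now do.\<close>
lemma card_trade_within:
  assumes "finite U" "E \<subseteq> U" "X \<subseteq> U \<inter> T" "U \<inter> T' = U \<inter> T - X"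
  shows "card ((U - E) \<inter> T') + card (E - T') + card (X - E)
       = card ((U - E) \<inter> T) + card (E - T) + card (X \<inter> E)"
proof -
  have fin: "finite E" "finite X" using assms(1-3) finite_subset by blast+
  have "(U - E) \<inter> T' = (U - E) \<inter> T - (X - E)" "(U - E) \<inter> T \<inter> (X - E) = X - E"
    using assms(3,4) by blast+
  then have "card ((U - E) \<inter> T') + card (X - E) = card ((U - E) \<inter> T)"
    using card_Int_Diff[of "(U - E) \<inter> T" "X - E"] assms(1) by simp
  moreover have "E - T' = (E - T) \<union> (X \<inter> E)" "(E - T) \<inter> (X \<inter> E) = {}"
    using assms(2-4) by blast+
  then have "card (E - T') = card (E - T) + card (X \<inter> E)"
    using fin by (simp add: card_Un_disjoint)
  ultimately show ?thesis by linarith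
qed

lemma cost_split_block:
  assumes sg: "simple_graph V E" and P: "partition_on V P" and S: "S \<in> P"
    and AB: "A \<union> B = S" "A \<inter> B = {}" "A \<noteq> {}" "B \<noteq> {}"
  shows "cost V E (insert A (insert B (P - {S}))) + card (cross A B - E)
       = cost V E P + card (cross A B \<inter> E)"
proof -
  let ?Q = "insert A (insert B (P - {S}))"
  have "finite (pairs V)"
    using simple_graph_finite[OF sg] unfolding pairs_def by (auto intro: finite_subset[of _ "Pow V"])
  moreover have "E \<subseteq> pairs V" using simple_graph_edgeD[OF sg] unfolding pairs_def by blast
  moreover have "cross A B \<subseteq> pairs V \<inter> within_blocks P"
    using AB S partition_onD1[OF P] unfolding cross_def pairs_def within_blocks_def by blast
  ultimately show ?thesis
    using card_trade_within[of "pairs V" E "cross A B" "within_blocks P" "within_blocks ?Q"]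
      within_blocks_split_block[OF P S AB(1,2)]
      cost_eq_within_blocks[OF sg P] cost_eq_within_blocks[OF sg partition_on_split_block[OF P S AB]]
    by simp
qed

section \<open>Colour counts\<close>

lemma card_filter_doubleton:
  assumes "u \<noteq> v"
  shows "card {x\<in>{u, v}. P x} = of_bool (P u) + of_bool (P v)"
proof -
  have "{x\<in>{u, v}. P x} = (if P u then {u} else {}) \<union> (if P v then {v} else {})" by auto
  then show ?thesis using assms by (cases "P u"; cases "P v") simp_all
qed

lemma card_eq_sum_color_counts:
  assumes "finite X" "col ` X \<subseteq> I" "finite I"
  shows "card X = (\<Sum>i\<in>I. card {x\<in>X. col x = i})"
proof -
  have "X = (\<Union>i\<in>I. {x\<in>X. col x = i})" using assms(2) by auto
  moreover have "card (\<Union>i\<in>I. {x\<in>X. col x = i}) = (\<Sum>i\<in>I. card {x\<in>X. col x = i})"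
    by (rule card_UN_disjoint) (use assms in auto)
  ultimately show ?thesis by simp
qed

lemma card_eq_multiple_of_ratio:
  fixes col :: "'a \<Rightarrow> nat"
  assumes "finite X" "col ` X \<subseteq> {1..k}" "\<forall>i\<in>{1..k}. card {x\<in>X. col x = i} = r * c i"
  shows "card X = r * (\<Sum>i=1..k. c i)"
  using card_eq_sum_color_counts[of X col "{1..k}"] assms by (simp add: sum_distrib_left)

lemma exists_subset_with_color_counts:
  assumes S: "finite S" and F: "F \<subseteq> S"
    and a: "\<forall>i\<in>I. card {x\<in>F. col x = i} \<le> a i \<and> a i \<le> card {x\<in>S. col x = i}"
  obtains A where "F \<subseteq> A" "A \<subseteq> S" "\<forall>i\<in>I. card {x\<in>A. col x = i} = a i"
proof -
  have "\<forall>i\<in>I. \<exists>G. G \<subseteq> {x\<in>S - F. col x = i} \<and> card G = a i - card {x\<in>F. col x = i}"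
  proof
    fix i assume i: "i \<in> I"
    have "{x\<in>S - F. col x = i} = {x\<in>S. col x = i} - {x\<in>F. col x = i}" by blast
    then have "card {x\<in>S - F. col x = i} = card {x\<in>S. col x = i} - card {x\<in>F. col x = i}"
      using S F by (simp add: card_Diff_subset finite_subset Collect_mono_iff subset_iff)
    then have "a i - card {x\<in>F. col x = i} \<le> card {x\<in>S - F. col x = i}" using a i by auto
    then show "\<exists>G. G \<subseteq> {x\<in>S - F. col x = i} \<and> card G = a i - card {x\<in>F. col x = i}"
      by (meson obtain_subset_with_card_n)
  qed
  then obtain G where
    "\<forall>i\<in>I. G i \<subseteq> {x\<in>S - F. col x = i} \<and> card (G i) = a i - card {x\<in>F. col x = i}"
    by (auto dest: bchoice)
  then have G: "\<And>i. i \<in> I \<Longrightarrow> G i \<subseteq> {x\<in>S - F. col x = i}"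
    "\<And>i. i \<in> I \<Longrightarrow> card (G i) = a i - card {x\<in>F. col x = i}"
    by auto
  define A where "A = F \<union> \<Union>(G ` I)"
  have "card {x\<in>A. col x = i} = a i" if i: "i \<in> I" for i
  proof -
    have "{x\<in>A. col x = i} = {x\<in>F. col x = i} \<union> G i" "{x\<in>F. col x = i} \<inter> G i = {}"
      unfolding A_def using G(1) i by auto
    moreover have "finite (G i)" "finite {x\<in>F. col x = i}"
      using G(1)[OF i] S F by (auto intro: finite_subset)
    ultimately show ?thesis using G(2)[OF i] a i by (simp add: card_Un_disjoint)
  qed
  moreover have "F \<subseteq> A" "A \<subseteq> S" unfolding A_def using F G(1) by auto
  ultimately show thesis using that by blast
qed

lemma card_color_Diff:
  assumes "finite S" "B \<subseteq> S"
  shows "card {x\<in>S - B. col x = i} = card {x\<in>S. col x = i} - card {x\<in>B. col x = i}"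
proof -
  have "{x\<in>S - B. col x = i} = {x\<in>S. col x = i} - {x\<in>B. col x = i}" by blast
  moreover have "{x\<in>B. col x = i} \<subseteq> {x\<in>S. col x = i}" using assms(2) by blast
  ultimately show ?thesis using assms by (simp add: card_Diff_subset finite_subset)
qed

lemma color_counts_Diff:
  assumes "finite S" "A \<subseteq> S"
    and "\<forall>i\<in>I. card {x\<in>S. col x = i} = m * c i" "\<forall>i\<in>I. card {x\<in>A. col x = i} = c i"
  shows "\<forall>i\<in>I. card {x\<in>S - A. col x = i} = (m - 1) * c i"
proof
  fix i assume i: "i \<in> I"
  have "card {x\<in>S - A. col x = i} = m * c i - c i"
    using card_color_Diff[OF assms(1,2), of col i] assms(3,4) i by simp
  then show "card {x\<in>S - A. col x = i} = (m - 1) * c i" by (simp add: diff_mult_distrib)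
qed

lemma card_le_ratio_sum:
  fixes c :: "nat \<Rightarrow> nat"
  assumes "\<forall>i\<in>{1..k}. 0 < c i"
  shows "k \<le> (\<Sum>i=1..k. c i)"
proof -
  have "(\<Sum>i=1..k. 1) \<le> (\<Sum>i=1..k. c i)" using assms by (intro sum_mono) (simp add: Suc_le_eq)
  then show ?thesis by simp
qed

section \<open>Splitting a fair block\<close>

text \<open>If every block with colour counts c contains exactly one of u and v, then u and v exhaust a
  colour with c_j = 1 and m = 2: otherwise a block containing both, or one avoiding both, can be
  chosen colour by colour.\<close>
lemma always_cut_pair_is_color_class:
  fixes col :: "'a \<Rightarrow> nat"
  assumes S: "finite S" and uv: "u \<in> S" "v \<in> S" "u \<noteq> v"
    and pos: "\<forall>i\<in>{1..k}. 0 < c i" and m: "2 \<le> m"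
    and counts: "\<forall>i\<in>{1..k}. card {x\<in>S. col x = i} = m * c i"
    and cut: "\<And>A. A \<subseteq> S \<Longrightarrow> \<forall>i\<in>{1..k}. card {x\<in>A. col x = i} = c i \<Longrightarrow>
      \<not> {u, v} \<subseteq> A \<and> {u, v} \<inter> A \<noteq> {}"
  shows "{u, v} = {x\<in>S. col x = col u}" and "col u \<in> {1..k}" and "m = 2"
proof -
  let ?n = "\<lambda>j. card {x\<in>{u, v}. col x = j}"
  have n: "?n j = of_bool (col u = j) + of_bool (col v = j)" for j
    using card_filter_doubleton[OF uv(3)] .
  have "\<exists>j\<in>{1..k}. c j < ?n j"
  proof (rule ccontr)
    assume "\<not> ?thesis"
    then have bounds: "\<forall>i\<in>{1..k}. ?n i \<le> c i \<and> c i \<le> card {x\<in>S. col x = i}"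
      using counts m by (auto simp: not_less)
    obtain A where "{u, v} \<subseteq> A" "A \<subseteq> S" "\<forall>i\<in>{1..k}. card {x\<in>A. col x = i} = c i"
      by (rule exists_subset_with_color_counts[OF S _ bounds]) (use uv in blast)
    then show False using cut by blast
  qed
  then obtain j where j: "j \<in> {1..k}" "c j < ?n j" ..
  have "\<exists>j'\<in>{1..k}. (m - 1) * c j' < ?n j'"
  proof (rule ccontr)
    assume none: "\<not> ?thesis"
    have bounds:
      "\<forall>i\<in>{1..k}. card {x\<in>{}. col x = i} \<le> c i \<and> c i \<le> card {x\<in>S - {u, v}. col x = i}"
    proof
      fix i assume i: "i \<in> {1..k}"
      have "?n i \<le> m * c i - c i" using none i by (auto simp: not_less diff_mult_distrib)
      moreover have "card {x\<in>S - {u, v}. col x = i} = m * c i - ?n i"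
        using card_color_Diff[OF S, of "{u, v}" col i] uv counts i by simp
      moreover have "c i \<le> m * c i" using m by simp
      moreover have "card {x\<in>{}. col x = i} = 0" by simp
      ultimately show "card {x\<in>{}. col x = i} \<le> c i \<and> c i \<le> card {x\<in>S - {u, v}. col x = i}"
        by linarith
    qed
    obtain A where "{} \<subseteq> A" "A \<subseteq> S - {u, v}" "\<forall>i\<in>{1..k}. card {x\<in>A. col x = i} = c i"
      by (rule exists_subset_with_color_counts[OF finite_Diff[OF S] empty_subsetI bounds])
    then have "{u, v} \<inter> A = {}" "A \<subseteq> S" by blast+
    then show False using cut[of A] \<open>\<forall>i\<in>{1..k}. card {x\<in>A. col x = i} = c i\<close> by blast
  qed
  then obtain j' where j': "j' \<in> {1..k}" "(m - 1) * c j' < ?n j'" ..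
  have n_le: "?n i \<le> 2" for i using n[of i] by simp
  have "0 < c j" using pos j(1) by blast
  then have "c j = 1" "col u = j" "col v = j"
    using j(2) n[of j] by (auto simp: of_bool_def split: if_splits)
  moreover have "0 < c j'" using pos j'(1) by blast
  then have "m - 1 \<le> (m - 1) * c j'" by simp
  then show "m = 2" using j'(2) n_le[of j'] m by linarith
  ultimately have "card {x\<in>S. col x = col u} = card {u, v}" using counts j(1) uv(3) by simp
  moreover have "{u, v} \<subseteq> {x\<in>S. col x = col u}" using uv \<open>col v = j\<close> \<open>col u = j\<close> by auto
  ultimately show "{u, v} = {x\<in>S. col x = col u}" using S by (simp add: card_subset_eq)
  show "col u \<in> {1..k}" using j(1) \<open>col u = j\<close> by simp
qed

text \<open>A forest on S has fewer than |S| edges; one of them can be kept uncut unless every edge is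
  a whole colour class of S, and then there are at most k of them.\<close>
lemma exists_color_block_with_few_cut_edges:
  fixes col :: "'a \<Rightarrow> nat"
  assumes f: "forest V E" and SV: "S \<subseteq> V" and colS: "col ` S \<subseteq> {1..k}"
    and pos: "\<forall>i\<in>{1..k}. 0 < c i" and m: "2 \<le> m" and d3: "3 \<le> (\<Sum>i=1..k. c i)"
    and counts: "\<forall>i\<in>{1..k}. card {x\<in>S. col x = i} = m * c i"
  obtains A where "A \<subseteq> S" "\<forall>i\<in>{1..k}. card {x\<in>A. col x = i} = c i"
    "card (cross A (S - A) \<inter> E) + 2 \<le> m * (\<Sum>i=1..k. c i)"
proof -
  let ?d = "\<Sum>i=1..k. c i"
  define ES where "ES = {e\<in>E. e \<subseteq> S}"
  have sg: "simple_graph V E" by (rule forest_simple_graph[OF f])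
  have finS: "finite S" using simple_graph_finite[OF sg] SV by (rule finite_subset[rotated])
  have "card S = m * ?d" by (rule card_eq_multiple_of_ratio[OF finS colS counts])
  then have "S \<noteq> {}" using m d3 by auto
  then have cES: "card ES < m * ?d"
    using forest_card_edges_within_less[OF f SV] \<open>card S = m * ?d\<close> unfolding ES_def by simp
  have finES: "finite ES" unfolding ES_def using finS by (auto intro: finite_subset[of _ "Pow S"])
  have cut_sub: "cross A (S - A) \<inter> E \<subseteq> ES" if "A \<subseteq> S" for A
    using that unfolding cross_def ES_def by blast
  show thesis
  proof (cases "\<exists>e\<in>ES. \<exists>A. A \<subseteq> S \<and> (\<forall>i\<in>{1..k}. card {x\<in>A. col x = i} = c i) \<and>
      (e \<subseteq> A \<or> e \<inter> A = {})")
    case True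
    then obtain e A where e: "e \<in> ES"
      and A: "A \<subseteq> S" "\<forall>i\<in>{1..k}. card {x\<in>A. col x = i} = c i"
      and uncut: "e \<subseteq> A \<or> e \<inter> A = {}" by blast
    have "e \<notin> cross A (S - A)" using uncut unfolding cross_def by blast
    then have "cross A (S - A) \<inter> E \<subseteq> ES - {e}" using cut_sub[OF A(1)] by blast
    then have "card (cross A (S - A) \<inter> E) \<le> card (ES - {e})"
      by (rule card_mono[OF finite_Diff[OF finES]])
    also have "\<dots> = card ES - 1" by (rule card_Diff_singleton[OF e])
    moreover have "0 < card ES" using e finES card_gt_0_iff by blast
    ultimately have "card (cross A (S - A) \<inter> E) + 2 \<le> m * ?d" using cES by linarith
    then show thesis using that[OF A] by blast
  next
    case False
    have "ES \<subseteq> (\<lambda>i. {x\<in>S. col x = i}) ` {1..k}"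
    proof
      fix e assume e: "e \<in> ES"
      then have "e \<in> E" "e \<subseteq> S" unfolding ES_def by auto
      then obtain u v where uv: "u \<noteq> v" "e = {u, v}" "u \<in> S" "v \<in> S"
        using simple_graph_edgeD[OF sg \<open>e \<in> E\<close>] by auto
      have "\<not> {u, v} \<subseteq> A \<and> {u, v} \<inter> A \<noteq> {}"
        if "A \<subseteq> S" "\<forall>i\<in>{1..k}. card {x\<in>A. col x = i} = c i" for A
        using False e that uv(2) by blast
      note color_class = always_cut_pair_is_color_class[OF finS uv(3,4,1) pos m counts this]
      show "e \<in> (\<lambda>i. {x\<in>S. col x = i}) ` {1..k}" using color_class(1,2) uv(2) by blast
    qed
    then have "card ES \<le> card ((\<lambda>i. {x\<in>S. col x = i}) ` {1..k})" by (intro card_mono) auto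
    also have "\<dots> \<le> k" using card_image_le[of "{1..k}" "\<lambda>i. {x\<in>S. col x = i}"] by simp
    finally have "card ES \<le> k" .
    moreover have "\<forall>i\<in>{1..k}. card {x\<in>{}. col x = i} \<le> c i \<and> c i \<le> card {x\<in>S. col x = i}"
      using counts m by simp
    then obtain A where A: "{} \<subseteq> A" "A \<subseteq> S" "\<forall>i\<in>{1..k}. card {x\<in>A. col x = i} = c i"
      by (rule exists_subset_with_color_counts[OF finS empty_subsetI])
    moreover have "card (cross A (S - A) \<inter> E) \<le> card ES"
      by (rule card_mono[OF finES cut_sub[OF A(2)]])
    moreover have "2 * ?d \<le> m * ?d" using m by (rule mult_le_mono1)
    ultimately have "card (cross A (S - A) \<inter> E) + 2 \<le> m * ?d"
      using card_le_ratio_sum[OF pos] d3 by linarith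
    then show thesis using that A(2,3) by blast
  qed
qed

section \<open>Fairness under a colour ratio\<close>

lemma dvd_if_dvd_mult_all:
  fixes n d :: nat
  assumes "Gcd (c ` I) = 1" "\<forall>i\<in>I. d dvd c i * n"
  shows "d dvd n"
proof -
  have "d dvd Gcd ((*) n ` c ` I)"
    using assms(2) by (auto intro!: Gcd_greatest simp: mult.commute)
  also have "Gcd ((*) n ` c ` I) = n" using assms(1) by (simp add: Gcd_mult)
  finally show ?thesis .
qed

lemma ratio_eq_scaled_ratio_iff:
  fixes a b n d t :: nat
  assumes "0 < n" "0 < d" "0 < t"
  shows "real a / real n = real (t * b) / real (t * d) \<longleftrightarrow> a * d = b * n"
proof -
  have "real a / real n = real (t * b) / real (t * d)
      \<longleftrightarrow> real a * real (t * d) = real (t * b) * real n"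
    using assms by (simp add: frac_eq_eq del: of_nat_mult)
  also have "\<dots> \<longleftrightarrow> t * (a * d) = t * (b * n)"
    by (simp only: of_nat_mult[symmetric] of_nat_eq_iff ac_simps)
  finally show ?thesis using assms(3) by simp
qed

locale ratio_coloring =
  fixes V :: "'a set" and col :: "'a \<Rightarrow> nat" and k :: nat and c :: "nat \<Rightarrow> nat"
  assumes finite_V: "finite V"
    and col_range: "col ` V \<subseteq> {1..k}"
    and ratio_pos: "\<forall>i\<in>{1..k}. 0 < c i"
    and ratio: "in_ratio V col k c"
begin

lemma color_class_eq: "X \<subseteq> V \<Longrightarrow> X \<inter> color_class V col i = {x\<in>X. col x = i}"
  unfolding color_class_def by blast

lemma ratio_scale: obtains t where "0 < t" "card V = t * (\<Sum>i=1..k. c i)"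
    "\<forall>i\<in>{1..k}. card {x\<in>V. col x = i} = t * c i"
proof -
  obtain t where "0 < t" "\<forall>i\<in>{1..k}. card {x\<in>V. col x = i} = t * c i"
    using ratio unfolding in_ratio_def color_class_def by blast
  then show thesis using that card_eq_multiple_of_ratio[OF finite_V col_range] by blast
qed

lemma ratio_sum_pos:
  assumes "x \<in> V"
  shows "0 < (\<Sum>i=1..k. c i)"
proof -
  have "col x \<in> {1..k}" using assms col_range by blast
  moreover from this have "0 < c (col x)" using ratio_pos by blast
  ultimately show ?thesis using member_le_sum[of "col x" "{1..k}" c] by simp
qed

lemma fair_iff_proportional:
  assumes X: "X \<subseteq> V" "X \<noteq> {}"
  shows "fair V col k X \<longleftrightarrow>
    (\<forall>i\<in>{1..k}. card {x\<in>X. col x = i} * (\<Sum>i=1..k. c i) = c i * card X)"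
proof -
  obtain t where t: "0 < t" "card V = t * (\<Sum>i=1..k. c i)"
    "\<forall>i\<in>{1..k}. card {x\<in>V. col x = i} = t * c i"
    by (rule ratio_scale)
  have d: "0 < (\<Sum>i=1..k. c i)" using ratio_sum_pos X by blast
  have "0 < card X" using X finite_V by (meson card_gt_0_iff finite_subset)
  note eq = ratio_eq_scaled_ratio_iff[OF \<open>0 < card X\<close> d t(1)]
  show ?thesis
    unfolding fair_def color_class_eq[OF X(1)]
  proof (intro ball_cong refl)
    fix i assume "i \<in> {1..k}"
    then show "real (card {x\<in>X. col x = i}) / real (card X)
        = real (card (color_class V col i)) / real (card V)
      \<longleftrightarrow> card {x\<in>X. col x = i} * (\<Sum>i=1..k. c i) = c i * card X"
      using eq t(2,3) by (simp add: color_class_def)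
  qed
qed

lemma fair_if_color_counts:
  assumes X: "X \<subseteq> V" "X \<noteq> {}" and counts: "\<forall>i\<in>{1..k}. card {x\<in>X. col x = i} = r * c i"
  shows "fair V col k X"
proof -
  have "card X = r * (\<Sum>i=1..k. c i)"
    using card_eq_multiple_of_ratio[OF _ _ counts] X(1) finite_V col_range
    by (meson finite_subset image_mono order_trans)
  then show ?thesis using counts unfolding fair_iff_proportional[OF X] by simp
qed

lemma color_counts_if_fair:
  assumes gcd: "Gcd (c ` {1..k}) = 1" and X: "X \<subseteq> V" "X \<noteq> {}" and fair: "fair V col k X"
  obtains r where "0 < r" "\<forall>i\<in>{1..k}. card {x\<in>X. col x = i} = r * c i"
proof -
  let ?d = "\<Sum>i=1..k. c i"
  have proportional: "\<forall>i\<in>{1..k}. card {x\<in>X. col x = i} * ?d = c i * card X"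
    using fair unfolding fair_iff_proportional[OF X] .
  have "\<forall>i\<in>{1..k}. ?d dvd c i * card X"
  proof
    fix i assume "i \<in> {1..k}"
    then have "c i * card X = card {x\<in>X. col x = i} * ?d" using proportional by simp
    then show "?d dvd c i * card X" by simp
  qed
  then have "?d dvd card X" by (rule dvd_if_dvd_mult_all[OF gcd])
  then obtain r where r: "card X = r * ?d" by (metis dvdE mult.commute)
  have "0 < ?d" using ratio_sum_pos X by blast
  moreover have "0 < card X" using X finite_V by (meson card_gt_0_iff finite_subset)
  ultimately have "0 < r" using r by simp
  moreover have "\<forall>i\<in>{1..k}. card {x\<in>X. col x = i} = r * c i"
  proof
    fix i assume "i \<in> {1..k}"
    then have "card {x\<in>X. col x = i} * ?d = c i * card X" using proportional by blast
    also have "\<dots> = (r * c i) * ?d" unfolding r by simp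
    finally show "card {x\<in>X. col x = i} = r * c i"
      using mult_right_cancel[of ?d] \<open>0 < ?d\<close> by blast
  qed
  ultimately show thesis using that by blast
qed

end

section \<open>Minimum-cost fair clusterings\<close>

lemma cost_split_block_less:
  assumes sg: "simple_graph V E" and P: "partition_on V P" and S: "S \<in> P"
    and AB: "A \<union> B = S" "A \<inter> B = {}" "A \<noteq> {}" "B \<noteq> {}"
    and few: "2 * card (cross A B \<inter> E) < card A * card B"
  shows "cost V E (insert A (insert B (P - {S}))) < cost V E P"
proof -
  have "finite A" "finite B"
    using simple_graph_finite[OF sg] AB(1) S partition_onD1[OF P] by (auto intro: finite_subset)
  then have "finite (cross A B)" by (simp add: cross_eq_image)
  then have "card A * card B = card (cross A B \<inter> E) + card (cross A B - E)"
    using card_cross[OF AB(2)] card_Int_Diff by metis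
  then show ?thesis using cost_split_block[OF sg P S AB] few by linarith
qed

lemma fair_clustering_split_block:
  assumes "fair_clustering V col k P" "S \<in> P"
    and "A \<union> B = S" "A \<inter> B = {}" "A \<noteq> {}" "B \<noteq> {}"
    and "fair V col k A" "fair V col k B"
  shows "fair_clustering V col k (insert A (insert B (P - {S})))"
  using assms partition_on_split_block unfolding fair_clustering_def by blast

lemma double_less_split_product:
  fixes m d x :: nat
  assumes "2 \<le> m" "3 \<le> d" "x + 2 \<le> m * d"
  shows "2 * x < d * ((m - 1) * d)"
proof -
  obtain n e where "m = n + 2" "d = e + 3" using assms(1,2) by (metis add.commute le_Suc_ex)
  then show ?thesis using assms(3) by (simp add: algebra_simps)
qed

context ratio_coloring
begin

lemma fair_split_lowers_cost:
  assumes f: "forest V E" and d3: "3 \<le> (\<Sum>i=1..k. c i)" and P: "fair_clustering V col k P"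
    and S: "S \<in> P" and m: "2 \<le> m" and counts: "\<forall>i\<in>{1..k}. card {x\<in>S. col x = i} = m * c i"
  obtains Q where "fair_clustering V col k Q" "cost V E Q < cost V E P"
proof -
  let ?d = "\<Sum>i=1..k. c i"
  have sg: "simple_graph V E" by (rule forest_simple_graph[OF f])
  have partP: "partition_on V P" using P unfolding fair_clustering_def by blast
  have SV: "S \<subseteq> V" using partP S partition_onD1 by blast
  have finS: "finite S" using finite_V SV finite_subset by blast
  have colS: "col ` S \<subseteq> {1..k}" using col_range SV by blast
  obtain A where A: "A \<subseteq> S" "\<forall>i\<in>{1..k}. card {x\<in>A. col x = i} = c i"
    and few: "card (cross A (S - A) \<inter> E) + 2 \<le> m * ?d"
    by (rule exists_color_block_with_few_cut_edges[OF f SV colS ratio_pos m d3 counts])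
  have B: "\<forall>i\<in>{1..k}. card {x\<in>S - A. col x = i} = (m - 1) * c i"
    by (rule color_counts_Diff[OF finS A(1) counts A(2)])
  have "col ` A \<subseteq> {1..k}" using A(1) colS by blast
  then have cardA: "card A = ?d"
    using card_eq_multiple_of_ratio[of A col k 1 c] A finS by (simp add: finite_subset)
  have cardB: "card (S - A) = (m - 1) * ?d"
    using card_eq_multiple_of_ratio[OF _ _ B] finS colS by blast
  have "0 < card A" "0 < card (S - A)" using cardA cardB d3 m by auto
  then have "A \<noteq> {}" "S - A \<noteq> {}" unfolding card_gt_0_iff by blast+
  moreover have "fair V col k A" "fair V col k (S - A)"
    using fair_if_color_counts[of A 1] fair_if_color_counts[OF _ \<open>S - A \<noteq> {}\<close> B]
      A SV \<open>A \<noteq> {}\<close> by auto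
  moreover have AB: "A \<union> (S - A) = S" "A \<inter> (S - A) = {}" using A(1) by blast+
  ultimately have "fair_clustering V col k (insert A (insert (S - A) (P - {S})))"
    by (intro fair_clustering_split_block[OF P S]) simp_all
  moreover have "2 * card (cross A (S - A) \<inter> E) < card A * card (S - A)"
    using double_less_split_product[OF m d3 few] cardA cardB by simp
  then have "cost V E (insert A (insert (S - A) (P - {S}))) < cost V E P"
    by (rule cost_split_block_less[OF sg partP S AB \<open>A \<noteq> {}\<close> \<open>S - A \<noteq> {}\<close>])
  ultimately show thesis using that by blast
qed

end

theorem mainTheorem2:
  fixes V :: "'a set" and E :: "'a set set" and col :: "'a \<Rightarrow> nat"
    and k :: nat and c :: "nat \<Rightarrow> nat" and P :: "'a set set"
  assumes "forest V E"
    and "k \<ge> 2"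
    and "col ` V \<subseteq> {1..k}"
    and "\<forall>i\<in>{1..k}. c i > 0"
    and "Gcd (c ` {1..k}) = 1"
    and "(\<Sum>i=1..k. c i) \<ge> 3"
    and "in_ratio V col k c"
    and "min_cost_fair_clustering V E col k P"
  shows "\<forall>S\<in>P. card S = (\<Sum>i=1..k. c i)"
proof
  fix S assume S: "S \<in> P"
  interpret ratio_coloring V col k c
    using simple_graph_finite[OF forest_simple_graph[OF assms(1)]]
    by (intro ratio_coloring.intro assms(3,4,7))
  have P: "fair_clustering V col k P"
    and min: "\<And>Q. fair_clustering V col k Q \<Longrightarrow> cost V E P \<le> cost V E Q"
    using assms(8) unfolding min_cost_fair_clustering_def by auto
  then have partP: "partition_on V P" and fairS: "fair V col k S"
    using S unfolding fair_clustering_def by blast+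
  then have SV: "S \<subseteq> V" and "S \<noteq> {}"
    using S partition_onD1[OF partP] partition_onD3[OF partP] by blast+
  then obtain m where m: "0 < m" "\<forall>i\<in>{1..k}. card {x\<in>S. col x = i} = m * c i"
    by (rule color_counts_if_fair[OF assms(5) _ _ fairS])
  have "\<not> 2 \<le> m"
  proof
    assume "2 \<le> m"
    then obtain Q where "fair_clustering V col k Q" "cost V E Q < cost V E P"
      by (rule fair_split_lowers_cost[OF assms(1,6) P S _ m(2)])
    then show False using min[of Q] by simp
  qed
  then have "m = 1" using m(1) by simp
  moreover have "col ` S \<subseteq> {1..k}" using SV col_range by blast
  ultimately show "card S = (\<Sum>i=1..k. c i)"
    using card_eq_multiple_of_ratio[OF _ _ m(2)] SV finite_V by (simp add: finite_subset)
qed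

end
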